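(* Let $G$ be a graph with an edge $e=t_1t_2$. Then $G$ has a fundamental rooted cycle basis (a spanning tree $T$ such that every fundamental cycle of $T$ contains $e$) if and only if there exist two vertex sets $S_1,S_2$ such that: (i) $S_1$ and $S_2$ partition $V(G)$; (ii) $t_1$ and $t_2$ belong to different sets of the partition; (iii) for each $i\in\{1,2\}$, the subgraph induced by $S_i$ is connected; (iv) for each $i\in\{1,2\}$, the subgraph induced by $S_i$ is acyclic.
   Context: For a spanning tree $T$, the fundamental cycle of a non-tree edge $f$ is $f$ together with the unique path in $T$ connecting the endpoints of $f$; the fundamental cycle basis of $T$ consists of all fundamental cycles, and it is rooted at $e$ if all of them contain $e$. *)

theory Defs
  imports Main
begin

definition graph :: "'a set \<Rightarrow> 'a set set \<Rightarrow> bool" where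
  "graph V E \<longleftrightarrow> finite V \<and> (\<forall>x\<in>E. x \<subseteq> V \<and> card x = 2)"

definition walk :: "'a set set \<Rightarrow> 'a list \<Rightarrow> bool" where
  "walk F xs \<longleftrightarrow> xs \<noteq> [] \<and> (\<forall>i. Suc i < length xs \<longrightarrow> {xs ! i, xs ! Suc i} \<in> F)"

definition path :: "'a set set \<Rightarrow> 'a list \<Rightarrow> bool" where
  "path F xs \<longleftrightarrow> walk F xs \<and> distinct xs"

definition path_edges :: "'a list \<Rightarrow> 'a set set" where
  "path_edges xs = {{xs ! i, xs ! Suc i} | i. Suc i < length xs}"

definition connected_on :: "'a set \<Rightarrow> 'a set set \<Rightarrow> bool" where
  "connected_on V F \<longleftrightarrow>
     (\<forall>u\<in>V. \<forall>v\<in>V. \<exists>p. walk F p \<and> set p \<subseteq> V \<and> hd p = u \<and> last p = v)"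

definition is_cycle :: "'a set set \<Rightarrow> 'a list \<Rightarrow> bool" where
  "is_cycle F xs \<longleftrightarrow> 3 \<le> length xs \<and> path F xs \<and> {last xs, hd xs} \<in> F"

definition acyclic_edges :: "'a set set \<Rightarrow> bool" where
  "acyclic_edges F \<longleftrightarrow> \<not> (\<exists>xs. is_cycle F xs)"

definition induced_edges :: "'a set set \<Rightarrow> 'a set \<Rightarrow> 'a set set" where
  "induced_edges E S = {x \<in> E. x \<subseteq> S}"

definition spanning_tree :: "'a set \<Rightarrow> 'a set set \<Rightarrow> 'a set set \<Rightarrow> bool" where
  "spanning_tree V E T \<longleftrightarrow> T \<subseteq> E \<and> connected_on V T \<and> acyclic_edges T"

text \<open>Fundamental cycle (as an edge set) of a non-tree edge f: f together with the
  edges of the unique path in T joining the endpoints of f.\<close>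
definition fundamental_cycle :: "'a set set \<Rightarrow> 'a set \<Rightarrow> 'a set set" where
  "fundamental_cycle T f =
     insert f (THE C. \<exists>p. path T p \<and> {hd p, last p} = f \<and> C = path_edges p)"

definition fundamental_rooted_basis ::
    "'a set \<Rightarrow> 'a set set \<Rightarrow> 'a set \<Rightarrow> 'a set set \<Rightarrow> bool" where
  "fundamental_rooted_basis V E e T \<longleftrightarrow>
     spanning_tree V E T \<and> (\<forall>f \<in> E - T. e \<in> fundamental_cycle T f)"

end

(* If every fundamental cycle of T passes through e = t1 t2, delete from T the first edge of
   the tree path from t1 to t2. This splits T into two subtrees separating t1 from t2. An edge
   of G inside one side but outside T would have its fundamental cycle inside that side, hence
   avoiding e; so each side induces exactly its subtree. Conversely, if both sides induce trees,
   adding e to them gives a spanning tree: e is the only edge between the sides, so the tree path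
   between the ends of any other (necessarily crossing) edge must use e. *)

theory Submission
  imports Defs
begin

section \<open>Walks and paths\<close>

lemma path_edges_Nil [simp]: "path_edges [] = {}"
  and path_edges_singleton [simp]: "path_edges [x] = {}"
  by (simp_all add: path_edges_def)

lemma path_edges_Cons_Cons [simp]: "path_edges (x # y # xs) = insert {x, y} (path_edges (y # xs))"
  unfolding path_edges_def
proof (intro set_eqI iffI)
  fix f assume "f \<in> {{(x # y # xs) ! i, (x # y # xs) ! Suc i} |i. Suc i < length (x # y # xs)}"
  then obtain i where "f = {(x # y # xs) ! i, (x # y # xs) ! Suc i}" "Suc i < length (x # y # xs)"
    by blast
  then show "f \<in> insert {x, y} {{(y # xs) ! i, (y # xs) ! Suc i} |i. Suc i < length (y # xs)}"
    by (cases i) auto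
next
  fix f assume "f \<in> insert {x, y} {{(y # xs) ! i, (y # xs) ! Suc i} |i. Suc i < length (y # xs)}"
  then show "f \<in> {{(x # y # xs) ! i, (x # y # xs) ! Suc i} |i. Suc i < length (x # y # xs)}"
    by (auto intro: exI[of _ 0]) (metis Suc_less_eq length_Cons nth_Cons_Suc)
qed

lemma path_edges_Cons: "xs \<noteq> [] \<Longrightarrow> path_edges (x # xs) = insert {x, hd xs} (path_edges xs)"
  by (cases xs) auto

lemma path_edges_append:
  "ys \<noteq> [] \<Longrightarrow> zs \<noteq> [] \<Longrightarrow>
     path_edges (ys @ zs) = insert {last ys, hd zs} (path_edges ys \<union> path_edges zs)"
  by (induction ys rule: induct_list012) (auto simp: path_edges_Cons)

lemma path_edges_rev [simp]: "path_edges (rev xs) = path_edges xs"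
proof (induction xs)
  case (Cons x xs)
  then show ?case
    by (cases "xs = []") (auto simp: path_edges_append path_edges_Cons last_rev insert_commute)
qed simp

lemma path_edges_subset_set: "f \<in> path_edges xs \<Longrightarrow> f \<subseteq> set xs"
  unfolding path_edges_def by auto

lemma mem_path_edges_iff:
  "f \<in> path_edges xs \<longleftrightarrow>
     (\<exists>ys zs. xs = ys @ zs \<and> ys \<noteq> [] \<and> zs \<noteq> [] \<and> f = {last ys, hd zs})"
proof
  assume "f \<in> path_edges xs"
  then show "\<exists>ys zs. xs = ys @ zs \<and> ys \<noteq> [] \<and> zs \<noteq> [] \<and> f = {last ys, hd zs}"
  proof (induction xs rule: induct_list012)
    case (3 x y xs)
    show ?case
    proof (cases "f = {x, y}")
      case True
      then show ?thesis by (intro exI[of _ "[x]"] exI[of _ "y # xs"]) auto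
    next
      case False
      with 3 obtain ys zs where "y # xs = ys @ zs" "ys \<noteq> []" "zs \<noteq> []" "f = {last ys, hd zs}"
        by auto
      then show ?thesis by (intro exI[of _ "x # ys"] exI[of _ zs]) auto
    qed
  qed simp_all
qed (auto simp: path_edges_append)

lemma walk_iff_path_edges: "walk F xs \<longleftrightarrow> xs \<noteq> [] \<and> path_edges xs \<subseteq> F"
  unfolding walk_def path_edges_def by blast

lemma walk_Cons_iff: "xs \<noteq> [] \<Longrightarrow> walk F (x # xs) \<longleftrightarrow> {x, hd xs} \<in> F \<and> walk F xs"
  by (simp add: walk_iff_path_edges path_edges_Cons)

lemma walk_mono: "walk F xs \<Longrightarrow> F \<subseteq> G \<Longrightarrow> walk G xs"
  by (auto simp: walk_iff_path_edges)

lemma walk_rev: "walk F xs \<Longrightarrow> walk F (rev xs)"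
  by (simp add: walk_iff_path_edges)

lemma walk_join:
  assumes "walk F xs" "walk F ys" "last xs = hd ys"
  shows "walk F (xs @ tl ys)" "hd (xs @ tl ys) = hd xs" "last (xs @ tl ys) = last ys"
    "set (xs @ tl ys) = set xs \<union> set ys"
proof -
  obtain y ys' where ys: "ys = y # ys'" using assms(2) by (cases ys) (auto simp: walk_def)
  have "xs \<noteq> []" using assms(1) by (simp add: walk_def)
  with assms show "walk F (xs @ tl ys)" "hd (xs @ tl ys) = hd xs"
    "last (xs @ tl ys) = last ys" "set (xs @ tl ys) = set xs \<union> set ys"
    unfolding ys
    by (cases "ys' = []"; auto simp: walk_iff_path_edges path_edges_append path_edges_Cons)+
qed

lemma path_nonempty: "path F xs \<Longrightarrow> xs \<noteq> []"
  by (simp add: path_def walk_def)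

lemma path_mono: "path F xs \<Longrightarrow> F \<subseteq> G \<Longrightarrow> path G xs"
  by (auto simp: path_def walk_mono)

lemma path_rev: "path F xs \<Longrightarrow> path F (rev xs)"
  by (simp add: path_def walk_rev)

lemma walk_imp_path:
  "walk F xs \<Longrightarrow> \<exists>ys. path F ys \<and> hd ys = hd xs \<and> last ys = last xs \<and> set ys \<subseteq> set xs"
proof (induction xs)
  case (Cons x xs)
  show ?case
  proof (cases "xs = []")
    case True
    then show ?thesis by (intro exI[of _ "[x]"]) (simp add: path_def walk_def)
  next
    case False
    with Cons.prems have e: "{x, hd xs} \<in> F" and "walk F xs" by (auto simp: walk_Cons_iff)
    with Cons.IH obtain ys
      where ys: "path F ys" "hd ys = hd xs" "last ys = last xs" "set ys \<subseteq> set xs"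
      by blast
    have "ys \<noteq> []" using ys(1) by (rule path_nonempty)
    show ?thesis
    proof (cases "x \<in> set ys")
      case True
      \<comment> \<open>cut the loop back to x\<close>
      then obtain r s where rs: "ys = r @ x # s" by (meson split_list)
      have "path F (x # s)"
        using ys(1) rs
        by (cases "r = []") (auto simp: path_def walk_iff_path_edges path_edges_append)
      with rs ys False show ?thesis by (intro exI[of _ "x # s"]) auto
    next
      case False
      with ys e \<open>ys \<noteq> []\<close> have "path F (x # ys)" by (auto simp: path_def walk_Cons_iff)
      with ys \<open>ys \<noteq> []\<close> \<open>xs \<noteq> []\<close> show ?thesis by (intro exI[of _ "x # ys"]) auto
    qed
  qed
qed (simp add: walk_def)

lemma walk_closed:
  assumes "walk F xs" "\<And>x y. {x, y} \<in> F \<Longrightarrow> x \<in> S \<Longrightarrow> y \<in> S" "hd xs \<in> S"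
  shows "set xs \<subseteq> S"
  using assms(1,3)
proof (induction xs)
  case (Cons x xs)
  then show ?case using assms(2) by (cases "xs = []") (auto simp: walk_Cons_iff)
qed simp

lemma distinct_hd_eq_last: "distinct xs \<Longrightarrow> xs \<noteq> [] \<Longrightarrow> hd xs = last xs \<Longrightarrow> xs = [hd xs]"
  by (cases xs) (auto split: if_splits)

section \<open>Cycles and forests\<close>

lemma is_cycle_iff:
  "is_cycle F xs \<longleftrightarrow> 3 \<le> length xs \<and> distinct xs \<and> insert {last xs, hd xs} (path_edges xs) \<subseteq> F"
  by (auto simp: is_cycle_def path_def walk_iff_path_edges)

lemma acyclic_edges_mono: "acyclic_edges G \<Longrightarrow> F \<subseteq> G \<Longrightarrow> acyclic_edges F"
  unfolding acyclic_edges_def is_cycle_iff by blast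

lemma hd_last_notin_path_edges:
  assumes "distinct xs" "3 \<le> length xs"
  shows "{hd xs, last xs} \<notin> path_edges xs"
proof
  assume "{hd xs, last xs} \<in> path_edges xs"
  then obtain ys zs
    where s: "xs = ys @ zs" "ys \<noteq> []" "zs \<noteq> []" "{hd xs, last xs} = {last ys, hd zs}"
    by (auto simp: mem_path_edges_iff)
  with assms(1) have "hd ys = last ys" "hd zs = last zs"
    by (auto simp: doubleton_eq_iff dest: last_in_set hd_in_set)
  moreover have "distinct ys" "distinct zs" using assms(1) s(1) by auto
  ultimately obtain a b where "ys = [a]" "zs = [b]"
    using s(2,3) by (metis distinct_hd_eq_last)
  with s(1) assms(2) show False by simp
qed

lemma cycle_edge_bypass:
  assumes "is_cycle F xs" and "g \<in> insert {last xs, hd xs} (path_edges xs)"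
  shows "\<exists>w. walk (F - {g}) w \<and> {hd w, last w} = g"
proof -
  have d: "distinct xs" and l: "3 \<le> length xs" and F: "insert {last xs, hd xs} (path_edges xs) \<subseteq> F"
    using assms(1) by (auto simp: is_cycle_iff)
  show ?thesis
  proof (cases "g = {last xs, hd xs}")
    case True
    with hd_last_notin_path_edges[OF d l] F l have "walk (F - {g}) xs"
      by (auto simp: walk_iff_path_edges insert_commute)
    with True show ?thesis by (auto simp: insert_commute)
  next
    case False
    with assms(2) obtain ys zs where s: "xs = ys @ zs" "ys \<noteq> []" "zs \<noteq> []" "g = {last ys, hd zs}"
      by (auto simp: mem_path_edges_iff)
    have "set ys \<inter> set zs = {}" "last ys \<in> set ys" "hd zs \<in> set zs" using d s by auto
    then have "g \<notin> path_edges ys" "g \<notin> path_edges zs"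
      using s by (blast dest: path_edges_subset_set)+
    moreover have "path_edges (zs @ ys) = insert {last xs, hd xs} (path_edges ys \<union> path_edges zs)"
      using s(1-3) by (auto simp: path_edges_append)
    moreover have "path_edges xs = insert g (path_edges ys \<union> path_edges zs)"
      using s by (simp add: path_edges_append)
    ultimately have "path_edges (zs @ ys) \<subseteq> F - {g}"
      using F False by auto
    then have "walk (F - {g}) (zs @ ys)"
      using s(2) by (simp add: walk_iff_path_edges)
    with s show ?thesis by (intro exI[of _ "zs @ ys"]) (auto simp: insert_commute)
  qed
qed

lemma acyclic_edges_insert:
  assumes "acyclic_edges F" and "\<nexists>w. walk F w \<and> {hd w, last w} = g"
  shows "acyclic_edges (insert g F)"
  unfolding acyclic_edges_def
proof
  assume "\<exists>xs. is_cycle (insert g F) xs"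
  then obtain xs where xs: "is_cycle (insert g F) xs" ..
  show False
  proof (cases "g \<in> insert {last xs, hd xs} (path_edges xs)")
    case True
    with cycle_edge_bypass[OF xs] obtain w where "walk (insert g F - {g}) w" "{hd w, last w} = g"
      by blast
    moreover have "insert g F - {g} \<subseteq> F" by blast
    ultimately show False using assms(2) walk_mono by blast
  next
    case False
    with xs have "is_cycle F xs" by (auto simp: is_cycle_iff)
    with assms(1) show False by (simp add: acyclic_edges_def)
  qed
qed

lemma acyclic_neighbours_eq:
  assumes "acyclic_edges F" "walk F w" "x \<notin> set w" "{x, hd w} \<in> F" "{x, last w} \<in> F"
  shows "hd w = last w"
proof (rule ccontr)
  assume ne: "hd w \<noteq> last w"
  obtain ys where ys: "path F ys" "hd ys = hd w" "last ys = last w" "set ys \<subseteq> set w"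
    using walk_imp_path[OF assms(2)] by blast
  have "length ys \<noteq> 1" using ys(2,3) ne by (auto simp: length_Suc_conv)
  moreover have "length ys \<noteq> 0" using path_nonempty[OF ys(1)] by simp
  ultimately have "2 \<le> length ys" by linarith
  moreover have "path F (x # ys)"
    using ys assms(3,4) path_nonempty[OF ys(1)] by (auto simp: path_def walk_Cons_iff)
  ultimately have "is_cycle F (x # ys)"
    using ys(3) assms(5) path_nonempty[OF ys(1)] by (auto simp: is_cycle_def insert_commute)
  with assms(1) show False by (simp add: acyclic_edges_def)
qed

lemma acyclic_path_unique:
  assumes "acyclic_edges F" "path F p" "path F q" "hd p = hd q" "last p = last q"
  shows "p = q"
  using assms(2-)
proof (induction p arbitrary: q)
  case (Cons x p)
  obtain q' where q: "q = x # q'"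
    using Cons.prems(2,3) path_nonempty by (cases q) auto
  show ?case
  proof (cases "p = [] \<or> q' = []")
    case True
    \<comment> \<open>then the common end points coincide, so both paths are trivial\<close>
    with Cons.prems q have "hd (x # p) = last (x # p)" "hd q = last q" by (auto simp: path_def)
    with Cons.prems q show ?thesis by (metis distinct_hd_eq_last path_def path_nonempty)
  next
    case False
    have p: "walk F p" "{x, hd p} \<in> F" "x \<notin> set p" "distinct p"
      using Cons.prems(1) False by (auto simp: path_def walk_Cons_iff)
    have q': "walk F q'" "{x, hd q'} \<in> F" "x \<notin> set q'" "distinct q'"
      using Cons.prems(2) False q by (auto simp: path_def walk_Cons_iff)
    have lpq: "last p = last q'" using Cons.prems(4) q False by simp
    let ?w = "p @ tl (rev q')"
    have "walk F ?w" "hd ?w = hd p" "last ?w = hd q'" "set ?w = set p \<union> set q'"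
      using walk_join[OF p(1) walk_rev[OF q'(1)]] lpq False by (simp_all add: hd_rev last_rev)
    then have "hd p = hd q'"
      using acyclic_neighbours_eq[OF assms(1), of ?w x] p q' by simp
    with Cons.IH[of q'] p q' lpq False show ?thesis unfolding q by (simp add: path_def)
  qed
qed (auto dest: path_nonempty)

lemma acyclic_path_edges_unique:
  assumes "acyclic_edges F" "path F p" "path F q" "{hd p, last p} = {hd q, last q}"
  shows "path_edges p = path_edges q"
proof -
  from assms(4) consider "hd p = hd q" "last p = last q" | "hd p = last q" "last p = hd q"
    by (auto simp: doubleton_eq_iff)
  then show ?thesis
  proof cases
    case 1
    then show ?thesis using acyclic_path_unique[OF assms(1-3)] by simp
  next
    case 2
    then have "p = rev q"
      using acyclic_path_unique[OF assms(1,2) path_rev[OF assms(3)]] path_nonempty[OF assms(3)]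
      by (simp add: hd_rev last_rev)
    then show ?thesis by simp
  qed
qed

lemma fundamental_cycle_eq:
  assumes "acyclic_edges T" "path T p" "{hd p, last p} = f"
  shows "fundamental_cycle T f = insert f (path_edges p)"
proof -
  have "(THE C. \<exists>q. path T q \<and> {hd q, last q} = f \<and> C = path_edges q) = path_edges p"
  proof (rule the_equality)
    fix C assume "\<exists>q. path T q \<and> {hd q, last q} = f \<and> C = path_edges q"
    then show "C = path_edges p"
      using acyclic_path_edges_unique[OF assms(1) _ assms(2)] assms(3) by blast
  qed (use assms in blast)
  then show ?thesis by (simp add: fundamental_cycle_def)
qed

section \<open>Reachability and components\<close>

definition reachable :: "'a set set \<Rightarrow> 'a set \<Rightarrow> 'a \<Rightarrow> 'a \<Rightarrow> bool" where
  "reachable F A x y \<longleftrightarrow> (\<exists>p. walk F p \<and> set p \<subseteq> A \<and> hd p = x \<and> last p = y)"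

definition component :: "'a set set \<Rightarrow> 'a set \<Rightarrow> 'a \<Rightarrow> 'a set" where
  "component F A x = {y. reachable F A x y}"

lemma connected_on_iff_reachable: "connected_on A F \<longleftrightarrow> (\<forall>u\<in>A. \<forall>v\<in>A. reachable F A u v)"
  by (simp add: connected_on_def reachable_def)

lemma reachable_refl: "x \<in> A \<Longrightarrow> reachable F A x x"
  unfolding reachable_def by (intro exI[of _ "[x]"]) (simp add: walk_def)

lemma reachable_edge: "{x, y} \<in> F \<Longrightarrow> x \<in> A \<Longrightarrow> y \<in> A \<Longrightarrow> reachable F A x y"
  unfolding reachable_def by (intro exI[of _ "[x, y]"]) (simp add: walk_iff_path_edges)

lemma reachable_sym: "reachable F A x y \<Longrightarrow> reachable F A y x"
  unfolding reachable_def by (metis walk_rev walk_def hd_rev last_rev set_rev)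

lemma reachable_trans:
  assumes "reachable F A x y" "reachable F A y z"
  shows "reachable F A x z"
proof -
  obtain p q where "walk F p" "set p \<subseteq> A" "hd p = x" "last p = y"
    and "walk F q" "set q \<subseteq> A" "hd q = y" "last q = z"
    using assms unfolding reachable_def by blast
  with walk_join[of F p q] show ?thesis unfolding reachable_def by (metis Un_subset_iff)
qed

lemma reachable_mono: "reachable F A x y \<Longrightarrow> F \<subseteq> G \<Longrightarrow> A \<subseteq> B \<Longrightarrow> reachable G B x y"
  unfolding reachable_def by (metis walk_mono order_trans)

lemma reachable_in: "reachable F A x y \<Longrightarrow> x \<in> A \<and> y \<in> A"
  unfolding reachable_def by (auto simp: walk_def)

lemma reachable_imp_path:
  "reachable F A x y \<Longrightarrow> \<exists>p. path F p \<and> set p \<subseteq> A \<and> hd p = x \<and> last p = y"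
  unfolding reachable_def using walk_imp_path by (metis order_trans)

lemma walk_induced_edges: "walk F p \<Longrightarrow> set p \<subseteq> A \<Longrightarrow> walk (induced_edges F A) p"
  unfolding walk_iff_path_edges induced_edges_def by (blast dest: path_edges_subset_set)

lemma walk_subset_component:
  assumes "walk F p" "set p \<subseteq> A"
  shows "set p \<subseteq> component F A (hd p)"
proof -
  have "hd p \<in> A" using assms by (auto simp: walk_def)
  then have "hd p \<in> component F A (hd p)" by (simp add: component_def reachable_refl)
  moreover have "y \<in> component F A (hd p)"
    if "{x, y} \<in> induced_edges F A" "x \<in> component F A (hd p)" for x y
  proof -
    from that have "reachable F A (hd p) x" "{x, y} \<in> F" "x \<in> A" "y \<in> A"
      by (auto simp: component_def induced_edges_def)
    then show ?thesis by (simp add: component_def reachable_trans[OF _ reachable_edge])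
  qed
  ultimately show ?thesis
    by (intro walk_closed[OF walk_induced_edges[OF assms]])
qed

lemma connected_on_component: "connected_on (component F A x) (induced_edges F (component F A x))"
proof -
  let ?C = "component F A x"
  have "reachable (induced_edges F ?C) ?C x y" if "y \<in> ?C" for y
  proof -
    from that obtain p where p: "walk F p" "set p \<subseteq> A" "hd p = x" "last p = y"
      by (auto simp: component_def reachable_def)
    with walk_subset_component have "set p \<subseteq> ?C" by blast
    with p(1) have "walk (induced_edges F ?C) p" by (rule walk_induced_edges)
    with p \<open>set p \<subseteq> ?C\<close> show ?thesis by (auto simp: reachable_def)
  qed
  then show ?thesis
    unfolding connected_on_iff_reachable by (blast intro: reachable_trans reachable_sym)
qed

lemma connected_on_mono: "connected_on A F \<Longrightarrow> F \<subseteq> G \<Longrightarrow> connected_on A G"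
  unfolding connected_on_iff_reachable by (meson reachable_mono order_refl)

lemma connected_on_insert_bridge:
  assumes "connected_on S1 F1" "connected_on S2 F2" "a \<in> S1" "b \<in> S2"
  shows "connected_on (S1 \<union> S2) (insert {a, b} (F1 \<union> F2))"
proof -
  let ?F = "insert {a, b} (F1 \<union> F2)" and ?S = "S1 \<union> S2"
  have "reachable ?F ?S a v" if v: "v \<in> ?S" for v
  proof -
    consider "v \<in> S1" | "v \<in> S2" using v by blast
    then show ?thesis
    proof cases
      case 1
      with assms(1,3) have "reachable F1 S1 a v" by (simp add: connected_on_iff_reachable)
      then show ?thesis by (rule reachable_mono) auto
    next
      case 2
      with assms(2,4) have "reachable F2 S2 b v" by (simp add: connected_on_iff_reachable)
      then have "reachable ?F ?S b v" by (rule reachable_mono) auto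
      moreover have "reachable ?F ?S a b" using assms(3,4) by (simp add: reachable_edge)
      ultimately show ?thesis by (rule reachable_trans[rotated])
    qed
  qed
  then show ?thesis
    unfolding connected_on_iff_reachable by (metis reachable_trans reachable_sym)
qed

lemma acyclic_path_edge_separates:
  assumes "acyclic_edges T" "path T p" "g \<in> path_edges p"
  shows "\<not> reachable (T - {g}) A (hd p) (last p)"
proof
  assume "reachable (T - {g}) A (hd p) (last p)"
  from reachable_imp_path[OF this]
  obtain q where q: "path (T - {g}) q" "hd q = hd p" "last q = last p" by blast
  have "path T q" using q(1) by (rule path_mono) blast
  with acyclic_path_unique[OF assms(1) _ assms(2)] q have "q = p" by simp
  with q(1) assms(3) show False by (auto simp: path_def walk_iff_path_edges)
qed

lemma tree_edge_components:
  assumes "connected_on V T" "acyclic_edges T" "{u, w} \<in> T" "u \<noteq> w" "u \<in> V" "w \<in> V"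
  defines "T' \<equiv> T - {{u, w}}"
  shows "component T' V u \<union> component T' V w = V" "component T' V u \<inter> component T' V w = {}"
proof -
  show "component T' V u \<inter> component T' V w = {}"
  proof (rule ccontr)
    assume "component T' V u \<inter> component T' V w \<noteq> {}"
    then obtain v where "reachable T' V u v" "reachable T' V w v" by (auto simp: component_def)
    then have "reachable T' V u w" by (blast intro: reachable_trans reachable_sym)
    moreover have "path T [u, w]" using assms(3,4) by (simp add: path_def walk_iff_path_edges)
    ultimately show False
      using acyclic_path_edge_separates[OF assms(2), of "[u, w]" "{u, w}" V] by (simp add: T'_def)
  qed
  have "v \<in> component T' V u \<union> component T' V w" if v: "v \<in> V" for v
  proof -
    have "reachable T V w v" using assms(1,6) v by (simp add: connected_on_iff_reachable)
    from reachable_imp_path[OF this]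
    obtain r where r: "path T r" "set r \<subseteq> V" "hd r = w" "last r = v" by blast
    show ?thesis
    proof (cases "{u, w} \<in> path_edges r")
      case False
      with r have "reachable T' V w v"
        by (auto simp: T'_def reachable_def path_def walk_iff_path_edges)
      then show ?thesis by (simp add: component_def)
    next
      case True
      \<comment> \<open>as w occurs only at the start of r, the edge uw is the first edge of r\<close>
      obtain r' where r': "r = w # r'" using r(3) path_nonempty[OF r(1)] by (cases r) auto
      with True have "r' \<noteq> []" by auto
      with r(1) r' have "{u, w} \<notin> path_edges r'"
        by (auto simp: path_def dest: path_edges_subset_set)
      with True r' \<open>r' \<noteq> []\<close> assms(4) have "hd r' = u"
        by (auto simp: path_edges_Cons doubleton_eq_iff)
      have "path_edges r' \<subseteq> T"
        using r(1) r' \<open>r' \<noteq> []\<close> by (auto simp: path_def walk_iff_path_edges path_edges_Cons)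
      with \<open>{u, w} \<notin> path_edges r'\<close> \<open>r' \<noteq> []\<close> have "walk T' r'"
        by (auto simp: T'_def walk_iff_path_edges)
      with r r' \<open>r' \<noteq> []\<close> \<open>hd r' = u\<close> have "reachable T' V u v"
        unfolding reachable_def by (intro exI[of _ r']) auto
      then show ?thesis by (simp add: component_def)
    qed
  qed
  then show "component T' V u \<union> component T' V w = V"
    by (auto simp: component_def dest: reachable_in)
qed

section \<open>Two disjoint induced subgraphs\<close>

lemma induced_edges_mono: "F \<subseteq> G \<Longrightarrow> induced_edges F S \<subseteq> induced_edges G S"
  by (auto simp: induced_edges_def)

lemma walk_induced_Un_stays:
  assumes "S1 \<inter> S2 = {}" "walk (induced_edges E S1 \<union> induced_edges E S2) w" "hd w \<in> S1"
  shows "set w \<subseteq> S1"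
proof (rule walk_closed[OF assms(2) _ assms(3)])
  fix x y assume "{x, y} \<in> induced_edges E S1 \<union> induced_edges E S2" "x \<in> S1"
  with assms(1) show "y \<in> S1" by (auto simp: induced_edges_def)
qed

lemma walk_induced_Un_crossing:
  assumes "S1 \<inter> S2 = {}" "walk (induced_edges E S1 \<union> induced_edges E S2) w"
    and "hd w \<in> S1 \<and> last w \<in> S2 \<or> hd w \<in> S2 \<and> last w \<in> S1"
  shows False
proof -
  have "last w \<in> set w" using assms(2) by (simp add: walk_def)
  moreover have "S2 \<inter> S1 = {}" "walk (induced_edges E S2 \<union> induced_edges E S1) w"
    using assms(1,2) by (simp_all add: Int_commute Un_commute)
  ultimately show False
    using assms walk_induced_Un_stays[OF assms(1,2)] walk_induced_Un_stays[of S2 S1 E w] by blast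
qed

lemma cycle_induced_Un_side:
  assumes "S1 \<inter> S2 = {}" "is_cycle (induced_edges E S1 \<union> induced_edges E S2) xs" "hd xs \<in> S1"
  shows "is_cycle (induced_edges E S1) xs"
proof -
  have "walk (induced_edges E S1 \<union> induced_edges E S2) xs"
    using assms(2) by (simp add: is_cycle_def path_def)
  then have "set xs \<subseteq> S1" by (rule walk_induced_Un_stays[OF assms(1) _ assms(3)])
  have xs: "3 \<le> length xs" "distinct xs"
    and edges: "insert {last xs, hd xs} (path_edges xs) \<subseteq> induced_edges E S1 \<union> induced_edges E S2"
    using assms(2) by (simp_all add: is_cycle_iff)
  have "insert {last xs, hd xs} (path_edges xs) \<subseteq> induced_edges E S1"
  proof
    fix f assume f: "f \<in> insert {last xs, hd xs} (path_edges xs)"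
    moreover have "xs \<noteq> []" using xs(1) by auto
    ultimately have "f \<subseteq> set xs" by (auto dest: path_edges_subset_set)
    with \<open>set xs \<subseteq> S1\<close> f edges show "f \<in> induced_edges E S1"
      by (auto simp: induced_edges_def)
  qed
  with xs show ?thesis by (simp add: is_cycle_iff)
qed

lemma acyclic_induced_Un:
  assumes "S1 \<inter> S2 = {}" "acyclic_edges (induced_edges E S1)" "acyclic_edges (induced_edges E S2)"
  shows "acyclic_edges (induced_edges E S1 \<union> induced_edges E S2)"
  unfolding acyclic_edges_def
proof
  assume "\<exists>xs. is_cycle (induced_edges E S1 \<union> induced_edges E S2) xs"
  then obtain xs where xs: "is_cycle (induced_edges E S1 \<union> induced_edges E S2) xs" ..
  then have "{last xs, hd xs} \<in> induced_edges E S1 \<union> induced_edges E S2" by (simp add: is_cycle_def)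
  then consider "hd xs \<in> S1" | "hd xs \<in> S2" by (auto simp: induced_edges_def)
  then show False
  proof cases
    case 1
    with cycle_induced_Un_side[OF assms(1) xs] assms(2) show False by (simp add: acyclic_edges_def)
  next
    case 2
    with cycle_induced_Un_side[of S2 S1 E xs] assms(1,3) xs show False
      by (simp add: acyclic_edges_def Int_commute Un_commute)
  qed
qed

section \<open>Rooted fundamental cycle bases\<close>

lemma graph_edgeE:
  assumes "graph V E" "f \<in> E"
  obtains x y where "f = {x, y}" "x \<noteq> y" "x \<in> V" "y \<in> V"
proof -
  from assms have "card f = 2" "f \<subseteq> V" by (auto simp: graph_def)
  then show thesis using that by (auto simp: card_2_iff)
qed

definition induces_tree :: "'a set set \<Rightarrow> 'a set \<Rightarrow> bool" where
  "induces_tree E S \<longleftrightarrow> connected_on S (induced_edges E S) \<and> acyclic_edges (induced_edges E S)"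

text \<open>The tree path between the ends of an edge inside S stays inside S, so it misses e.\<close>
lemma rooted_basis_induced_edges_subset:
  assumes "graph V E" "acyclic_edges T" "\<forall>f \<in> E - T. e \<in> fundamental_cycle T f"
    and "connected_on S (induced_edges T S)" "\<not> e \<subseteq> S"
  shows "induced_edges E S \<subseteq> T"
proof
  fix f assume f: "f \<in> induced_edges E S"
  show "f \<in> T"
  proof (rule ccontr)
    assume "f \<notin> T"
    with f assms(3) have "e \<in> fundamental_cycle T f" by (auto simp: induced_edges_def)
    from f have "f \<in> E" "f \<subseteq> S" by (simp_all add: induced_edges_def)
    then obtain x y where xy: "f = {x, y}" "x \<in> S" "y \<in> S"
      using graph_edgeE[OF assms(1)] by (metis insert_subset)
    with assms(4) have "reachable (induced_edges T S) S x y"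
      by (simp add: connected_on_iff_reachable)
    from reachable_imp_path[OF this]
    obtain q where q: "path (induced_edges T S) q" "hd q = x" "last q = y" by blast
    have "path_edges q \<subseteq> induced_edges T S"
      using q(1) by (simp add: path_def walk_iff_path_edges)
    moreover have "path T q" using q(1) by (rule path_mono) (auto simp: induced_edges_def)
    then have "fundamental_cycle T f = insert f (path_edges q)"
      using fundamental_cycle_eq[OF assms(2)] q xy by simp
    ultimately show False
      using \<open>e \<in> fundamental_cycle T f\<close> assms(5) xy by (auto simp: induced_edges_def)
  qed
qed

lemma rooted_basis_side_induces_tree:
  assumes "graph V E" "T \<subseteq> E" "acyclic_edges T" "\<forall>f \<in> E - T. e \<in> fundamental_cycle T f"
    and "connected_on S (induced_edges T S)" "\<not> e \<subseteq> S"
  shows "induces_tree E S"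
proof -
  have "induced_edges E S = induced_edges T S"
    using rooted_basis_induced_edges_subset[OF assms(1,3-6)] induced_edges_mono[OF assms(2)]
    by (auto simp: induced_edges_def)
  with assms(3,5) show ?thesis
    by (auto simp: induces_tree_def induced_edges_def intro: acyclic_edges_mono)
qed

lemma rooted_basis_imp_induced_trees:
  assumes "graph V E" "{t1, t2} \<in> E" "fundamental_rooted_basis V E {t1, t2} T"
  shows "\<exists>S1 S2. S1 \<union> S2 = V \<and> S1 \<inter> S2 = {} \<and> t1 \<in> S1 \<and> t2 \<in> S2 \<and>
           induces_tree E S1 \<and> induces_tree E S2"
proof -
  have T: "T \<subseteq> E" "connected_on V T" "acyclic_edges T"
    and rooted: "\<forall>f \<in> E - T. {t1, t2} \<in> fundamental_cycle T f"
    using assms(3) by (auto simp: fundamental_rooted_basis_def spanning_tree_def)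
  have t: "t1 \<noteq> t2" "t1 \<in> V" "t2 \<in> V"
    using graph_edgeE[OF assms(1,2)] by (metis doubleton_eq_iff)+
  with T(2) have "reachable T V t1 t2" by (simp add: connected_on_iff_reachable)
  from reachable_imp_path[OF this]
  obtain p where p: "path T p" "set p \<subseteq> V" "hd p = t1" "last p = t2" by blast
  obtain p' where p': "p = t1 # p'" "p' \<noteq> []"
    using path_nonempty[OF p(1)] p(3,4) t(1) by (cases p) (auto split: if_splits)
  define x where "x = hd p'"
  have g: "{t1, x} \<in> T" "t1 \<noteq> x" "x \<in> V"
    using p p' by (auto simp: x_def path_def walk_Cons_iff)
  define T' where "T' = T - {{t1, x}}"
  define S1 where "S1 = component T' V t1"
  define S2 where "S2 = component T' V x"
  have S: "S1 \<union> S2 = V" "S1 \<inter> S2 = {}"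
    using tree_edge_components[OF T(2,3) g(1,2) t(2) g(3)] by (simp_all add: S1_def S2_def T'_def)
  have "t1 \<in> S1" using t(2) by (simp add: S1_def component_def reachable_refl)
  have "{t1, x} \<in> path_edges p" using p' by (simp add: x_def path_edges_Cons)
  with acyclic_path_edge_separates[OF T(3) p(1)] p(3,4) have "t2 \<notin> S1"
    by (simp add: S1_def T'_def component_def)
  with S t(3) \<open>t1 \<in> S1\<close> have sides: "t1 \<in> S1" "t2 \<in> S2" "\<not> {t1, t2} \<subseteq> S1" "\<not> {t1, t2} \<subseteq> S2"
    by auto
  have "T' \<subseteq> T" by (simp add: T'_def)
  then have "connected_on S1 (induced_edges T S1)" "connected_on S2 (induced_edges T S2)"
    unfolding S1_def S2_def
    by (rule connected_on_mono[OF connected_on_component induced_edges_mono])+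
  with rooted_basis_side_induces_tree[OF assms(1) T(1,3) rooted] sides S show ?thesis by blast
qed

lemma induced_trees_imp_rooted_basis:
  assumes "graph V E" "{a, b} \<in> E" "S1 \<union> S2 = V" "S1 \<inter> S2 = {}" "a \<in> S1" "b \<in> S2"
    and "induces_tree E S1" "induces_tree E S2"
  shows "fundamental_rooted_basis V E {a, b}
           (insert {a, b} (induced_edges E S1 \<union> induced_edges E S2))"
proof -
  define F where "F = induced_edges E S1 \<union> induced_edges E S2"
  define T where "T = insert {a, b} F"
  note crossing = walk_induced_Un_crossing[OF assms(4), of E, folded F_def]
  have "acyclic_edges T"
    unfolding T_def
  proof (rule acyclic_edges_insert)
    show "acyclic_edges F"
      using acyclic_induced_Un[OF assms(4)] assms(7,8) by (simp add: F_def induces_tree_def)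
    show "\<nexists>w. walk F w \<and> {hd w, last w} = {a, b}"
      using crossing assms(5,6) by (auto simp: doubleton_eq_iff)
  qed
  have "connected_on V T"
    using connected_on_insert_bridge[OF _ _ assms(5,6)] assms(3,7,8)
    by (simp add: T_def F_def induces_tree_def)
  have "{a, b} \<in> fundamental_cycle T f" if f: "f \<in> E - T" for f
  proof -
    obtain x y where xy: "f = {x, y}" "x \<in> V" "y \<in> V"
      using graph_edgeE[OF assms(1)] f by blast
    with f assms(3) have sides: "x \<in> S1 \<and> y \<in> S2 \<or> x \<in> S2 \<and> y \<in> S1"
      by (auto simp: T_def F_def induced_edges_def)
    from \<open>connected_on V T\<close> xy have "reachable T V x y" by (simp add: connected_on_iff_reachable)
    from reachable_imp_path[OF this]
    obtain q where q: "path T q" "hd q = x" "last q = y" by blast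
    have "{a, b} \<in> path_edges q"
    proof (rule ccontr)
      assume "{a, b} \<notin> path_edges q"
      with q(1) have "walk F q" by (auto simp: T_def path_def walk_iff_path_edges)
      with crossing sides q show False by blast
    qed
    with fundamental_cycle_eq[OF \<open>acyclic_edges T\<close> q(1)] q xy show ?thesis by simp
  qed
  moreover have "T \<subseteq> E" using assms(2) by (auto simp: T_def F_def induced_edges_def)
  ultimately show ?thesis using \<open>acyclic_edges T\<close> \<open>connected_on V T\<close>
    unfolding F_def[symmetric] T_def[symmetric] fundamental_rooted_basis_def spanning_tree_def
    by blast
qed

theorem mainTheorem15:
  fixes V :: "'a set" and E :: "'a set set" and t1 t2 :: 'a
  assumes "graph V E"
    and "{t1, t2} \<in> E"
  shows "(\<exists>T. fundamental_rooted_basis V E {t1, t2} T) \<longleftrightarrow>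
         (\<exists>S1 S2. S1 \<union> S2 = V \<and> S1 \<inter> S2 = {} \<and>
            ((t1 \<in> S1 \<and> t2 \<in> S2) \<or> (t1 \<in> S2 \<and> t2 \<in> S1)) \<and>
            connected_on S1 (induced_edges E S1) \<and> connected_on S2 (induced_edges E S2) \<and>
            acyclic_edges (induced_edges E S1) \<and> acyclic_edges (induced_edges E S2))"
    (is "?basis \<longleftrightarrow> ?split")
proof
  assume ?basis
  then obtain T where "fundamental_rooted_basis V E {t1, t2} T" ..
  from rooted_basis_imp_induced_trees[OF assms this] show ?split
    unfolding induces_tree_def by blast
next
  assume ?split
  then obtain S1 S2 where S: "S1 \<union> S2 = V" "S1 \<inter> S2 = {}"
    and t: "t1 \<in> S1 \<and> t2 \<in> S2 \<or> t1 \<in> S2 \<and> t2 \<in> S1"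
    and trees: "induces_tree E S1" "induces_tree E S2"
    unfolding induces_tree_def by blast
  from t show ?basis
  proof
    assume "t1 \<in> S1 \<and> t2 \<in> S2"
    with induced_trees_imp_rooted_basis[OF assms S _ _ trees] show ?basis by blast
  next
    assume t': "t1 \<in> S2 \<and> t2 \<in> S1"
    have "{t2, t1} \<in> E" using assms(2) by (simp add: insert_commute)
    from induced_trees_imp_rooted_basis[OF assms(1) this S _ _ trees] t'
    show ?basis by (auto simp: insert_commute)
  qed
qed

end
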